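(* Let $0\le r,s\le n$ and $\mathbf c_1,\mathbf c_2,\mathbf c_1',\mathbf c_2'\in\mathrm{GF}(q^m)^n$ with $d_{\mathrm R}(\mathbf c_1,\mathbf c_2)>d_{\mathrm R}(\mathbf c_1',\mathbf c_2')$. Then $$|B_r(\mathbf c_1)\cap B_s(\mathbf c_2)|\le |B_r(\mathbf c_1')\cap B_s(\mathbf c_2')|.$$
   Context: The rank $\mathrm{rk}(\mathbf x)$ of $\mathbf x\in\mathrm{GF}(q^m)^n$ is the maximum number of its coordinates linearly independent over $\mathrm{GF}(q)$, and $d_{\mathrm R}(\mathbf x,\mathbf y)=\mathrm{rk}(\mathbf x-\mathbf y)$. $B_r(\mathbf x)=\{\mathbf y\in\mathrm{GF}(q^m)^n: d_{\mathrm R}(\mathbf x,\mathbf y)\le r\}$ is the ball of rank radius $r$ centered at $\mathbf x$. *)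

theory Defs
  imports "HOL-Library.FuncSet"
begin

text \<open>GF(q^m) is modelled as an arbitrary finite field type 'a, and GF(q) as a subfield F of it
  (then q = card F and m = the degree of 'a over F).\<close>

definition subfield :: "'a::field set \<Rightarrow> bool" where
  "subfield F \<longleftrightarrow> 0 \<in> F \<and> 1 \<in> F \<and>
     (\<forall>a\<in>F. \<forall>b\<in>F. a + b \<in> F \<and> a * b \<in> F) \<and>
     (\<forall>a\<in>F. - a \<in> F) \<and> (\<forall>a\<in>F. a \<noteq> 0 \<longrightarrow> inverse a \<in> F)"

definition vecs :: "nat \<Rightarrow> (nat \<Rightarrow> 'a) set" where
  "vecs n = PiE {..<n} (\<lambda>_. UNIV)"

definition lin_indep_over :: "'a::field set \<Rightarrow> (nat \<Rightarrow> 'a) \<Rightarrow> nat set \<Rightarrow> bool" where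
  "lin_indep_over F x I \<longleftrightarrow>
     (\<forall>c. (\<forall>i\<in>I. c i \<in> F) \<longrightarrow> (\<Sum>i\<in>I. c i * x i) = 0 \<longrightarrow> (\<forall>i\<in>I. c i = 0))"

definition rk :: "'a::field set \<Rightarrow> nat \<Rightarrow> (nat \<Rightarrow> 'a) \<Rightarrow> nat" where
  "rk F n x = Max {card I | I. I \<subseteq> {..<n} \<and> lin_indep_over F x I}"

definition rank_dist :: "'a::field set \<Rightarrow> nat \<Rightarrow> (nat \<Rightarrow> 'a) \<Rightarrow> (nat \<Rightarrow> 'a) \<Rightarrow> nat" where
  "rank_dist F n x y = rk F n (\<lambda>i. x i - y i)"

definition rank_ball :: "'a::field set \<Rightarrow> nat \<Rightarrow> nat \<Rightarrow> (nat \<Rightarrow> 'a) \<Rightarrow> (nat \<Rightarrow> 'a) set" where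
  "rank_ball F n r x = {y \<in> vecs n. rank_dist F n x y \<le> r}"

end

theory Submission
  imports Defs
begin

text \<open>
  Translating by \<open>c\<^sub>1\<close>, \<open>|B\<^sub>r(c\<^sub>1) \<inter> B\<^sub>s(c\<^sub>2)|\<close> is the size of the lens of all \<open>y\<close> with
  \<open>rk y \<le> r\<close> and \<open>rk (y - u) \<le> s\<close>, where \<open>u = c\<^sub>2 - c\<^sub>1\<close>. Compare \<open>u\<close> with
  \<open>u(j := 0)\<close>: writing \<open>y = z(j := x)\<close> with \<open>z\<^sub>j = 0\<close>, each of the two ranks grows by one
  exactly when \<open>x\<close> leaves a fixed \<open>GF(q)\<close>-subspace, so the fibre of the lens over \<open>z\<close> is
  cut out by conditions \<open>x \<in> W\<close> and \<open>x - u\<^sub>j \<in> W'\<close> (each waived when its rank bound has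
  room to spare). Such a set is empty or a coset of \<open>W \<inter> W'\<close>, so it is no larger than for
  \<open>u\<^sub>j = 0\<close>, and equally large when \<open>u\<^sub>j \<in> W + W'\<close>, which holds when \<open>u\<^sub>j\<close> is a
  \<open>GF(q)\<close>-combination of the other coordinates. Hence zeroing coordinates never shrinks the
  lens and zeroing dependent ones preserves it, so \<open>u\<close> may be cut down to \<open>rk v\<close> independent
  coordinates and \<open>v\<close> to a basis of its coordinates. A coordinate permutation followed by a
  \<open>GF(q)\<close>-linear automorphism of \<open>GF(q\<^sup>m)\<close> then maps one vector onto the other, and both
  are rank isometries fixing \<open>0\<close>.
\<close>

lemma
  assumes "subfield F"
  shows subfield_0: "0 \<in> F"
    and subfield_1: "1 \<in> F"
    and subfield_add: "a \<in> F \<Longrightarrow> b \<in> F \<Longrightarrow> a + b \<in> F"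
    and subfield_mult: "a \<in> F \<Longrightarrow> b \<in> F \<Longrightarrow> a * b \<in> F"
    and subfield_uminus: "a \<in> F \<Longrightarrow> - a \<in> F"
    and subfield_inverse: "a \<in> F \<Longrightarrow> inverse a \<in> F"
    and subfield_diff: "a \<in> F \<Longrightarrow> b \<in> F \<Longrightarrow> a - b \<in> F"
  using assms unfolding subfield_def
  by (auto simp only: diff_conv_add_uminus) (metis inverse_zero)

lemma subfield_card_gt_1:
  assumes "subfield (F :: 'a::{field,finite} set)"
  shows "1 < card F"
proof -
  have "{0, 1} \<subseteq> F" using subfield_0[OF assms] subfield_1[OF assms] by blast
  then have "card {0::'a, 1} \<le> card F" by (rule card_mono[OF finite])
  then show ?thesis by simp
qed

section \<open>Spans and independence over a subfield\<close>

definition span_over :: "'a::field set \<Rightarrow> ('i \<Rightarrow> 'a) \<Rightarrow> 'i set \<Rightarrow> 'a set" where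
  "span_over F x I = {\<Sum>i\<in>I. c i * x i | c. \<forall>i\<in>I. c i \<in> F}"

definition subspace_over :: "'a::field set \<Rightarrow> 'a set \<Rightarrow> bool" where
  "subspace_over F W \<longleftrightarrow> 0 \<in> W \<and> (\<forall>a\<in>W. \<forall>b\<in>W. a + b \<in> W) \<and> (\<forall>k\<in>F. \<forall>a\<in>W. k * a \<in> W)"

lemma
  assumes "subspace_over F W"
  shows subspace_over_0: "0 \<in> W"
    and subspace_over_add: "a \<in> W \<Longrightarrow> b \<in> W \<Longrightarrow> a + b \<in> W"
    and subspace_over_scale: "k \<in> F \<Longrightarrow> a \<in> W \<Longrightarrow> k * a \<in> W"
  using assms unfolding subspace_over_def by blast+

lemma subspace_over_diff:
  assumes "subfield F" "subspace_over F W" "a \<in> W" "b \<in> W"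
  shows "a - b \<in> W"
proof -
  have "(- 1) * b \<in> W"
    using subspace_over_scale[OF assms(2) _ assms(4)] subfield_uminus[OF assms(1) subfield_1[OF assms(1)]]
    by blast
  then have "a + (- 1) * b \<in> W" by (rule subspace_over_add[OF assms(2) assms(3)])
  then show ?thesis by simp
qed

lemma span_over_eq_image: "span_over F x I = (\<lambda>c. \<Sum>i\<in>I. c i * x i) ` (I \<rightarrow>\<^sub>E F)"
proof (intro set_eqI iffI)
  fix v assume "v \<in> span_over F x I"
  then obtain c where "v = (\<Sum>i\<in>I. c i * x i)" "\<forall>i\<in>I. c i \<in> F" unfolding span_over_def by blast
  then have "v = (\<Sum>i\<in>I. restrict c I i * x i)" "restrict c I \<in> I \<rightarrow>\<^sub>E F" by auto
  then show "v \<in> (\<lambda>c. \<Sum>i\<in>I. c i * x i) ` (I \<rightarrow>\<^sub>E F)" by blast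
qed (auto simp: span_over_def)

lemma span_over_subspace:
  assumes "subfield F"
  shows "subspace_over F (span_over F x I)"
  unfolding subspace_over_def span_over_def
proof (intro conjI ballI)
  show "0 \<in> {\<Sum>i\<in>I. c i * x i |c. \<forall>i\<in>I. c i \<in> F}"
    using subfield_0[OF assms] by (intro CollectI exI[of _ "\<lambda>_. 0"]) simp
next
  fix a b assume "a \<in> {\<Sum>i\<in>I. c i * x i |c. \<forall>i\<in>I. c i \<in> F}" "b \<in> {\<Sum>i\<in>I. c i * x i |c. \<forall>i\<in>I. c i \<in> F}"
  then obtain c d where "a = (\<Sum>i\<in>I. c i * x i)" "b = (\<Sum>i\<in>I. d i * x i)"
    and "\<forall>i\<in>I. c i \<in> F" "\<forall>i\<in>I. d i \<in> F"
    by blast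
  then show "a + b \<in> {\<Sum>i\<in>I. c i * x i |c. \<forall>i\<in>I. c i \<in> F}"
    using subfield_add[OF assms]
    by (intro CollectI exI[of _ "\<lambda>i. c i + d i"]) (simp add: sum.distrib distrib_right)
next
  fix k a assume "k \<in> F" "a \<in> {\<Sum>i\<in>I. c i * x i |c. \<forall>i\<in>I. c i \<in> F}"
  then obtain c where "a = (\<Sum>i\<in>I. c i * x i)" "\<forall>i\<in>I. c i \<in> F" by blast
  then show "k * a \<in> {\<Sum>i\<in>I. c i * x i |c. \<forall>i\<in>I. c i \<in> F}"
    using \<open>k \<in> F\<close> subfield_mult[OF assms]
    by (intro CollectI exI[of _ "\<lambda>i. k * c i"]) (simp add: sum_distrib_left mult.assoc)
qed

lemma span_over_mem:
  assumes "subfield F" "finite I" "i \<in> I"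
  shows "x i \<in> span_over F x I"
proof -
  have "(\<Sum>k\<in>I. (if k = i then 1 else 0) * x k) = (\<Sum>k\<in>I. if k = i then x k else 0)"
    by (rule sum.cong) auto
  then have "(\<Sum>k\<in>I. (if k = i then 1 else 0) * x k) = x i"
    using assms(2,3) by simp
  then show ?thesis
    unfolding span_over_def using subfield_0[OF assms(1)] subfield_1[OF assms(1)]
    by (intro CollectI exI[of _ "\<lambda>k. if k = i then 1 else 0"]) auto
qed

lemma span_over_cong:
  "(\<And>i. i \<in> I \<Longrightarrow> x i = y i) \<Longrightarrow> span_over F x I = span_over F y I"
  unfolding span_over_def by (metis (no_types, lifting) sum.cong)

lemma span_over_minimal:
  assumes "subfield F" "finite I" "\<forall>i\<in>I. x i \<in> W" "subspace_over F W"
  shows "span_over F x I \<subseteq> W"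
proof
  fix v assume "v \<in> span_over F x I"
  then obtain c where c: "v = (\<Sum>i\<in>I. c i * x i)" "\<forall>i\<in>I. c i \<in> F" unfolding span_over_def by blast
  have "(\<Sum>i\<in>I. c i * x i) \<in> W" using assms(2) c(2) assms(3)
  proof (induction I)
    case empty then show ?case using subspace_over_0[OF assms(4)] by simp
  next
    case (insert i I)
    then show ?case using subspace_over_add[OF assms(4)] subspace_over_scale[OF assms(4)] by simp
  qed
  then show "v \<in> W" using c(1) by simp
qed

lemma span_over_mono:
  assumes "subfield F" "I \<subseteq> J" "finite J"
  shows "span_over F x I \<subseteq> span_over F x J"
  using assms finite_subset[OF assms(2,3)] span_over_mem[OF assms(1,3)]
  by (intro span_over_minimal span_over_subspace) auto

lemma span_over_insert:
  assumes "finite I" "j \<notin> I"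
  shows "span_over F x (insert j I) = {w + k * x j | w k. w \<in> span_over F x I \<and> k \<in> F}"
proof (intro set_eqI iffI)
  fix v assume "v \<in> span_over F x (insert j I)"
  then obtain c where c: "v = (\<Sum>i\<in>insert j I. c i * x i)" "\<forall>i\<in>insert j I. c i \<in> F"
    unfolding span_over_def by blast
  then have "v = (\<Sum>i\<in>I. c i * x i) + c j * x j" "(\<Sum>i\<in>I. c i * x i) \<in> span_over F x I"
    using assms unfolding span_over_def by (auto simp: add.commute)
  then show "v \<in> {w + k * x j | w k. w \<in> span_over F x I \<and> k \<in> F}"
    using c(2) by blast
next
  fix v assume "v \<in> {w + k * x j | w k. w \<in> span_over F x I \<and> k \<in> F}"
  then obtain c k where v: "v = (\<Sum>i\<in>I. c i * x i) + k * x j" "\<forall>i\<in>I. c i \<in> F" "k \<in> F"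
    unfolding span_over_def by blast
  have "(\<Sum>i\<in>I. (c(j := k)) i * x i) = (\<Sum>i\<in>I. c i * x i)"
    using assms(2) by (intro sum.cong) auto
  then have "v = (\<Sum>i\<in>insert j I. (c(j := k)) i * x i)"
    using v(1) assms by (simp add: add.commute)
  then show "v \<in> span_over F x (insert j I)"
    unfolding span_over_def using v(2,3) by (intro CollectI exI[of _ "c(j := k)"]) auto
qed

lemma span_over_insert_absorb:
  assumes "subfield F" "finite I" "j \<notin> I" "x j \<in> span_over F x I"
  shows "span_over F x (insert j I) = span_over F x I"
proof -
  have "w + k * x j \<in> span_over F x I" if "w \<in> span_over F x I" "k \<in> F" for w k
    using span_over_subspace[OF assms(1)] that assms(4)
    by (meson subspace_over_add subspace_over_scale)
  moreover have "w = w + 0 * x j" for w by simp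
  ultimately show ?thesis
    unfolding span_over_insert[OF assms(2,3)] using subfield_0[OF assms(1)] by blast
qed

lemma card_span_over_insert:
  fixes x :: "'i \<Rightarrow> 'a::{field,finite}"
  assumes F: "subfield F" and "finite I" "j \<notin> I" and new: "x j \<notin> span_over F x I"
  shows "card (span_over F x (insert j I)) = card F * card (span_over F x I)"
proof -
  let ?W = "span_over F x I"
  have W: "subspace_over F ?W" by (rule span_over_subspace[OF F])
  have "inj_on (\<lambda>(k, w). w + k * x j) (F \<times> ?W)"
  proof (rule inj_onI, clarify)
    fix k w k' w' assume "k \<in> F" "w \<in> ?W" "k' \<in> F" "w' \<in> ?W" and eq: "w + k * x j = w' + k' * x j"
    show "k = k' \<and> w = w'"
    proof (rule ccontr)
      assume "\<not> (k = k' \<and> w = w')"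
      then have "k \<noteq> k'" using eq by auto
      then have "x j = inverse (k - k') * (w' - w)"
        using eq by (simp add: field_simps)
      also have "\<dots> \<in> ?W"
        using \<open>k \<in> F\<close> \<open>k' \<in> F\<close> \<open>w \<in> ?W\<close> \<open>w' \<in> ?W\<close>
        by (intro subspace_over_scale[OF W] subfield_inverse[OF F] subfield_diff[OF F]
            subspace_over_diff[OF F W])
      finally show False using new by simp
    qed
  qed
  moreover have "span_over F x (insert j I) = (\<lambda>(k, w). w + k * x j) ` (F \<times> ?W)"
    unfolding span_over_insert[OF assms(2,3)] by auto
  ultimately show ?thesis by (simp add: card_image card_cartesian_product)
qed

lemma lin_indep_overD:
  "lin_indep_over F x I \<Longrightarrow> \<forall>i\<in>I. c i \<in> F \<Longrightarrow> (\<Sum>i\<in>I. c i * x i) = 0 \<Longrightarrow> \<forall>i\<in>I. c i = 0"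
  unfolding lin_indep_over_def by blast

lemma lin_indep_over_iff_inj_on:
  assumes F: "subfield F"
  shows "lin_indep_over F x I \<longleftrightarrow> inj_on (\<lambda>c. \<Sum>i\<in>I. c i * x i) (I \<rightarrow>\<^sub>E F)"
proof
  assume indep: "lin_indep_over F x I"
  show "inj_on (\<lambda>c. \<Sum>i\<in>I. c i * x i) (I \<rightarrow>\<^sub>E F)"
  proof (rule inj_onI)
    fix c d assume c: "c \<in> I \<rightarrow>\<^sub>E F" and d: "d \<in> I \<rightarrow>\<^sub>E F"
      and "(\<Sum>i\<in>I. c i * x i) = (\<Sum>i\<in>I. d i * x i)"
    then have "(\<Sum>i\<in>I. (c i - d i) * x i) = 0"
      by (simp add: left_diff_distrib sum_subtractf)
    moreover have "\<forall>i\<in>I. c i - d i \<in> F" using c d subfield_diff[OF F] by auto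
    ultimately have "\<forall>i\<in>I. c i - d i = 0"
      using lin_indep_overD[OF indep, of "\<lambda>i. c i - d i"] by blast
    then show "c = d" using c d by (intro PiE_ext) auto
  qed
next
  assume inj: "inj_on (\<lambda>c. \<Sum>i\<in>I. c i * x i) (I \<rightarrow>\<^sub>E F)"
  show "lin_indep_over F x I"
    unfolding lin_indep_over_def
  proof (intro allI impI)
    fix c assume "\<forall>i\<in>I. c i \<in> F" "(\<Sum>i\<in>I. c i * x i) = 0"
    then have "restrict c I \<in> I \<rightarrow>\<^sub>E F" "(\<lambda>i\<in>I. 0) \<in> I \<rightarrow>\<^sub>E F"
      "(\<Sum>i\<in>I. restrict c I i * x i) = (\<Sum>i\<in>I. (\<lambda>i\<in>I. 0) i * x i)"
      using subfield_0[OF F] by auto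
    then have "restrict c I = (\<lambda>i\<in>I. 0)" using inj_onD[OF inj] by blast
    then show "\<forall>i\<in>I. c i = 0" by (metis restrict_apply')
  qed
qed

lemma lin_indep_over_iff_card_span:
  fixes x :: "nat \<Rightarrow> 'a::{field,finite}"
  assumes F: "subfield F" and "finite I"
  shows "lin_indep_over F x I \<longleftrightarrow> card (span_over F x I) = card F ^ card I"
proof -
  have "lin_indep_over F x I \<longleftrightarrow>
      card ((\<lambda>c. \<Sum>i\<in>I. c i * x i) ` (I \<rightarrow>\<^sub>E F)) = card (I \<rightarrow>\<^sub>E F)"
    unfolding lin_indep_over_iff_inj_on[OF F] using assms(2)
    by (intro inj_on_iff_eq_card finite_PiE) auto
  then show ?thesis
    using assms(2) by (simp add: span_over_eq_image card_PiE)
qed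

lemma lin_indep_over_insert:
  fixes x :: "nat \<Rightarrow> 'a::{field,finite}"
  assumes F: "subfield F" and "finite I" "lin_indep_over F x I" "x j \<notin> span_over F x I"
  shows "lin_indep_over F x (insert j I)"
proof -
  have "j \<notin> I" using span_over_mem[OF F assms(2)] assms(4) by blast
  then show ?thesis
    using assms card_span_over_insert[OF F assms(2) _ assms(4)]
    by (simp add: lin_indep_over_iff_card_span)
qed

lemma lin_indep_over_subset:
  assumes "subfield F" "finite I" "J \<subseteq> I" "lin_indep_over F x I"
  shows "lin_indep_over F x J"
  unfolding lin_indep_over_def
proof (intro allI impI)
  fix c assume c: "\<forall>i\<in>J. c i \<in> F" and sum: "(\<Sum>i\<in>J. c i * x i) = 0"
  let ?d = "\<lambda>i. if i \<in> J then c i else 0"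
  have "(\<Sum>i\<in>I. ?d i * x i) = (\<Sum>i\<in>I. if i \<in> J then c i * x i else 0)"
    by (rule sum.cong) auto
  also have "\<dots> = 0"
    using assms(2,3) sum by (simp add: sum.inter_restrict[symmetric] Int_absorb1)
  finally have "(\<Sum>i\<in>I. ?d i * x i) = 0" .
  moreover have "\<forall>i\<in>I. ?d i \<in> F" using c subfield_0[OF assms(1)] by auto
  ultimately have d0: "\<forall>i\<in>I. ?d i = 0" using lin_indep_overD[OF assms(4), of ?d] by blast
  show "\<forall>i\<in>J. c i = 0"
  proof
    fix i assume "i \<in> J"
    with assms(3) d0 have "?d i = 0" by blast
    with \<open>i \<in> J\<close> show "c i = 0" by simp
  qed
qed

lemma lin_indep_over_cong:
  "(\<And>i. i \<in> I \<Longrightarrow> x i = y i) \<Longrightarrow> lin_indep_over F x I \<longleftrightarrow> lin_indep_over F y I"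
  unfolding lin_indep_over_def by (metis (no_types, lifting) sum.cong)

section \<open>Rank\<close>

lemma
  fixes x :: "nat \<Rightarrow> 'a::field"
  shows card_le_rk: "I \<subseteq> {..<n} \<Longrightarrow> lin_indep_over F x I \<Longrightarrow> card I \<le> rk F n x"
    and rk_attained: "\<exists>I. I \<subseteq> {..<n} \<and> lin_indep_over F x I \<and> card I = rk F n x"
proof -
  let ?C = "{card I | I. I \<subseteq> {..<n} \<and> lin_indep_over F x I}"
  have "?C \<subseteq> {..n}"
  proof
    fix m assume "m \<in> ?C"
    then obtain I where "m = card I" "I \<subseteq> {..<n}" by blast
    then show "m \<in> {..n}" using card_mono[of "{..<n}" I] by simp
  qed
  then have fin: "finite ?C" by (rule finite_subset) simp
  show "I \<subseteq> {..<n} \<Longrightarrow> lin_indep_over F x I \<Longrightarrow> card I \<le> rk F n x"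
    unfolding rk_def by (rule Max_ge[OF fin]) blast
  have "lin_indep_over F x {}" by (simp add: lin_indep_over_def)
  then have "?C \<noteq> {}" by blast
  then have "rk F n x \<in> ?C" unfolding rk_def by (rule Max_in[OF fin])
  then obtain I where "rk F n x = card I" "I \<subseteq> {..<n}" "lin_indep_over F x I"
    unfolding mem_Collect_eq by (elim exE conjE)
  then show "\<exists>I. I \<subseteq> {..<n} \<and> lin_indep_over F x I \<and> card I = rk F n x" by metis
qed

lemma obtain_rk_basis:
  fixes x :: "nat \<Rightarrow> 'a::{field,finite}"
  assumes F: "subfield F"
  obtains I where "I \<subseteq> {..<n}" "lin_indep_over F x I" "card I = rk F n x"
    "span_over F x I = span_over F x {..<n}"
proof -
  obtain I where I: "I \<subseteq> {..<n}" "lin_indep_over F x I" "card I = rk F n x"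
    using rk_attained by metis
  have fin: "finite I" using I(1) finite_subset by blast
  have "x j \<in> span_over F x I" if "j < n" for j
  proof (rule ccontr)
    assume new: "x j \<notin> span_over F x I"
    then have "j \<notin> I" using span_over_mem[OF F fin] by blast
    moreover have "card (insert j I) \<le> rk F n x"
      using I(1) that by (intro card_le_rk lin_indep_over_insert[OF F fin I(2) new]) auto
    ultimately show False using I(3) fin by simp
  qed
  then have "span_over F x {..<n} \<subseteq> span_over F x I"
    by (intro span_over_minimal[OF F] span_over_subspace[OF F]) auto
  moreover have "span_over F x I \<subseteq> span_over F x {..<n}" by (rule span_over_mono[OF F I(1)]) simp
  ultimately show ?thesis using that I by blast
qed

lemma card_span_over_rk:
  fixes x :: "nat \<Rightarrow> 'a::{field,finite}"
  assumes F: "subfield F"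
  shows "card (span_over F x {..<n}) = card F ^ rk F n x"
proof -
  obtain I where I: "I \<subseteq> {..<n}" "lin_indep_over F x I" "card I = rk F n x"
    "span_over F x I = span_over F x {..<n}"
    by (rule obtain_rk_basis[OF F])
  have "finite I" using I(1) finite_subset by blast
  then show ?thesis using I lin_indep_over_iff_card_span[OF F] by simp
qed

lemma rk_eqI:
  fixes x :: "nat \<Rightarrow> 'a::{field,finite}"
  assumes F: "subfield F" and "card (span_over F x {..<n}) = card F ^ k"
  shows "rk F n x = k"
proof -
  have "card F ^ rk F n x = card F ^ k" using assms(2) card_span_over_rk[OF F] by simp
  then show ?thesis by (simp add: power_inject_exp[OF subfield_card_gt_1[OF F]])
qed

lemma rk_eq_if_card_span_eq:
  fixes x y :: "nat \<Rightarrow> 'a::{field,finite}"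
  assumes F: "subfield F" and "card (span_over F x {..<n}) = card (span_over F y {..<n})"
  shows "rk F n x = rk F n y"
  using assms(2) card_span_over_rk[OF F, of y n] by (intro rk_eqI[OF F]) simp

lemma rk_cong:
  fixes x y :: "nat \<Rightarrow> 'a::{field,finite}"
  assumes F: "subfield F" and "\<And>i. i < n \<Longrightarrow> x i = y i"
  shows "rk F n x = rk F n y"
proof -
  have "span_over F x {..<n} = span_over F y {..<n}" using assms(2) by (intro span_over_cong) simp
  then show ?thesis by (intro rk_eq_if_card_span_eq[OF F]) simp
qed

lemma rk_eq_0_iff:
  fixes x :: "nat \<Rightarrow> 'a::{field,finite}"
  assumes F: "subfield F"
  shows "rk F n x = 0 \<longleftrightarrow> (\<forall>i<n. x i = 0)"
proof
  assume "rk F n x = 0"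
  then have "card (span_over F x {..<n}) = 1" using card_span_over_rk[OF F] by simp
  moreover have "0 \<in> span_over F x {..<n}" using subspace_over_0[OF span_over_subspace[OF F]] .
  ultimately have "span_over F x {..<n} = {0}" by (auto simp: card_1_singleton_iff)
  then show "\<forall>i<n. x i = 0" using span_over_mem[OF F, of "{..<n}"] by blast
next
  assume "\<forall>i<n. x i = 0"
  then have "span_over F x {..<n} = {0}"
    unfolding span_over_def using subfield_0[OF F] by auto
  then show "rk F n x = 0" by (intro rk_eqI[OF F]) simp
qed

lemma rk_fun_upd:
  fixes z :: "nat \<Rightarrow> 'a::{field,finite}"
  assumes F: "subfield F" and "j < n" "z j = 0"
  shows "rk F n (z(j := v)) = rk F n z + of_bool (v \<notin> span_over F z {..<n})"
proof -
  define K where "K = {..<n} - {j}"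
  have K: "finite K" "j \<notin> K" "{..<n} = insert j K" using assms(2) unfolding K_def by auto
  have z0: "z j \<in> span_over F z K"
    using subspace_over_0[OF span_over_subspace[OF F]] assms(3) by simp
  have span_z: "span_over F z {..<n} = span_over F z K"
    unfolding K(3) by (rule span_over_insert_absorb[OF F K(1,2) z0])
  have span_upd: "span_over F (z(j := v)) K = span_over F z K"
    using K(2) by (intro span_over_cong) auto
  show ?thesis
  proof (cases "v \<in> span_over F z {..<n}")
    case True
    then have "(z(j := v)) j \<in> span_over F (z(j := v)) K" using span_z span_upd by simp
    then have "span_over F (z(j := v)) {..<n} = span_over F (z(j := v)) K"
      unfolding K(3) by (rule span_over_insert_absorb[OF F K(1,2)])
    then have "span_over F (z(j := v)) {..<n} = span_over F z {..<n}" using span_z span_upd by simp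
    then have "rk F n (z(j := v)) = rk F n z" by (intro rk_eq_if_card_span_eq[OF F]) simp
    then show ?thesis using True by simp
  next
    case False
    then have "(z(j := v)) j \<notin> span_over F (z(j := v)) K" using span_z span_upd by simp
    then have "card (span_over F (z(j := v)) {..<n}) = card F * card (span_over F (z(j := v)) K)"
      unfolding K(3) by (rule card_span_over_insert[OF F K(1,2)])
    then have "card (span_over F (z(j := v)) {..<n}) = card F * card (span_over F z {..<n})"
      using span_z span_upd by simp
    then have "card (span_over F (z(j := v)) {..<n}) = card F ^ (rk F n z + 1)"
      using card_span_over_rk[OF F, of z n] by simp
    then show ?thesis using False by (simp add: rk_eqI[OF F])
  qed
qed

section \<open>Linear maps and coordinate permutations\<close>

definition linear_over :: "'a::field set \<Rightarrow> ('a \<Rightarrow> 'a) \<Rightarrow> bool" where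
  "linear_over F \<phi> \<longleftrightarrow> (\<forall>a b. \<phi> (a + b) = \<phi> a + \<phi> b) \<and> (\<forall>k\<in>F. \<forall>a. \<phi> (k * a) = k * \<phi> a)"

lemma linear_over_0: "linear_over F \<phi> \<Longrightarrow> \<phi> 0 = 0"
  unfolding linear_over_def by (metis add_0 add_cancel_right_right)

lemma linear_over_diff: "linear_over F \<phi> \<Longrightarrow> \<phi> (a - b) = \<phi> a - \<phi> b"
  unfolding linear_over_def by (metis diff_add_cancel eq_diff_eq)

lemma linear_over_sum:
  assumes "linear_over F \<phi>" "\<forall>i\<in>I. c i \<in> F"
  shows "\<phi> (\<Sum>i\<in>I. c i * x i) = (\<Sum>i\<in>I. c i * \<phi> (x i))"
  using assms(2)
proof (induction I rule: infinite_finite_induct)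
  case (insert i I)
  then show ?case using assms(1) unfolding linear_over_def by simp
qed (simp_all add: linear_over_0[OF assms(1)])

lemma span_over_linear_image:
  assumes "linear_over F \<phi>"
  shows "span_over F (\<lambda>i. \<phi> (x i)) I = \<phi> ` span_over F x I"
proof (intro set_eqI iffI)
  fix v assume "v \<in> span_over F (\<lambda>i. \<phi> (x i)) I"
  then obtain c where "v = (\<Sum>i\<in>I. c i * \<phi> (x i))" "\<forall>i\<in>I. c i \<in> F"
    unfolding span_over_def by blast
  then have "v = \<phi> (\<Sum>i\<in>I. c i * x i)" "(\<Sum>i\<in>I. c i * x i) \<in> span_over F x I"
    using linear_over_sum[OF assms, of I c x] unfolding span_over_def by auto
  then show "v \<in> \<phi> ` span_over F x I" by blast
next
  fix v assume "v \<in> \<phi> ` span_over F x I"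
  then obtain c where "v = \<phi> (\<Sum>i\<in>I. c i * x i)" "\<forall>i\<in>I. c i \<in> F"
    unfolding span_over_def by blast
  then have "v = (\<Sum>i\<in>I. c i * \<phi> (x i))" using linear_over_sum[OF assms, of I c x] by simp
  then show "v \<in> span_over F (\<lambda>i. \<phi> (x i)) I"
    unfolding span_over_def using \<open>\<forall>i\<in>I. c i \<in> F\<close> by blast
qed

lemma rk_linear_image:
  fixes x :: "nat \<Rightarrow> 'a::{field,finite}"
  assumes F: "subfield F" and "linear_over F \<phi>" "inj \<phi>"
  shows "rk F n (\<lambda>i. \<phi> (x i)) = rk F n x"
  using assms(3)
  by (intro rk_eq_if_card_span_eq[OF F])
    (simp add: span_over_linear_image[OF assms(2)] card_image inj_on_subset)

lemma rk_uminus: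
  fixes x :: "nat \<Rightarrow> 'a::{field,finite}"
  assumes "subfield F"
  shows "rk F n (\<lambda>i. - x i) = rk F n x"
  using assms by (intro rk_linear_image) (auto simp: linear_over_def inj_def)

lemma rank_dist_commute:
  fixes x y :: "nat \<Rightarrow> 'a::{field,finite}"
  assumes "subfield F"
  shows "rank_dist F n x y = rank_dist F n y x"
  unfolding rank_dist_def using rk_uminus[OF assms, of n "\<lambda>i. y i - x i"] by simp

lemma rank_dist_eq_0_iff:
  fixes x y :: "nat \<Rightarrow> 'a::{field,finite}"
  assumes F: "subfield F" and "x \<in> vecs n" "y \<in> vecs n"
  shows "rank_dist F n x y = 0 \<longleftrightarrow> x = y"
  using assms(2,3) unfolding rank_dist_def rk_eq_0_iff[OF F] vecs_def
  by (auto intro: PiE_ext)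

lemma span_over_reindex:
  assumes "inj_on \<pi> I"
  shows "span_over F (\<lambda>i. x (\<pi> i)) I = span_over F x (\<pi> ` I)"
proof (intro set_eqI iffI)
  fix v assume "v \<in> span_over F (\<lambda>i. x (\<pi> i)) I"
  then obtain c where c: "v = (\<Sum>i\<in>I. c i * x (\<pi> i))" "\<forall>i\<in>I. c i \<in> F"
    unfolding span_over_def by blast
  let ?d = "\<lambda>k. c (inv_into I \<pi> k)"
  have "(\<Sum>k\<in>\<pi> ` I. ?d k * x k) = (\<Sum>i\<in>I. c i * x (\<pi> i))"
    using assms by (simp add: sum.reindex)
  moreover have "\<forall>k\<in>\<pi> ` I. ?d k \<in> F" using c(2) assms by auto
  ultimately show "v \<in> span_over F x (\<pi> ` I)"
    unfolding span_over_def using c(1) by (intro CollectI exI[of _ ?d]) simp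
next
  fix v assume "v \<in> span_over F x (\<pi> ` I)"
  then obtain d where d: "v = (\<Sum>k\<in>\<pi> ` I. d k * x k)" "\<forall>k\<in>\<pi> ` I. d k \<in> F"
    unfolding span_over_def by blast
  then have "v = (\<Sum>i\<in>I. d (\<pi> i) * x (\<pi> i))" using assms by (simp add: sum.reindex)
  then show "v \<in> span_over F (\<lambda>i. x (\<pi> i)) I"
    unfolding span_over_def using d(2) by (intro CollectI exI[of _ "\<lambda>i. d (\<pi> i)"]) simp
qed

lemma rk_permute:
  fixes x :: "nat \<Rightarrow> 'a::{field,finite}"
  assumes F: "subfield F" and \<pi>: "bij_betw \<pi> {..<n} {..<n}"
  shows "rk F n (\<lambda>i. x (\<pi> i)) = rk F n x"
proof -
  have "span_over F (\<lambda>i. x (\<pi> i)) {..<n} = span_over F x {..<n}"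
    using span_over_reindex[OF bij_betw_imp_inj_on[OF \<pi>]] bij_betw_imp_surj_on[OF \<pi>] by simp
  then show ?thesis by (intro rk_eq_if_card_span_eq[OF F]) simp
qed

lemma lin_indep_over_reindex:
  fixes x :: "nat \<Rightarrow> 'a::{field,finite}"
  assumes F: "subfield F" and "finite I" "inj_on \<pi> I"
  shows "lin_indep_over F (\<lambda>i. x (\<pi> i)) I \<longleftrightarrow> lin_indep_over F x (\<pi> ` I)"
  using assms(2,3)
  by (simp add: lin_indep_over_iff_card_span[OF F] span_over_reindex card_image)

lemma lin_indep_over_card_less:
  fixes x :: "nat \<Rightarrow> 'a::{field,finite}"
  assumes F: "subfield F" and "finite I" "lin_indep_over F x I"
  shows "card I < card (UNIV :: 'a set)"
proof -
  have "card I < 2 ^ card I" by (rule less_exp)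
  also have "\<dots> \<le> card F ^ card I" using subfield_card_gt_1[OF F] by (simp add: power_mono)
  also have "\<dots> = card (span_over F x I)"
    using assms by (simp add: lin_indep_over_iff_card_span[OF F])
  also have "\<dots> \<le> card (UNIV :: 'a set)" by (rule card_mono) auto
  finally show ?thesis .
qed

lemma lin_indep_over_fun_upd:
  fixes x :: "nat \<Rightarrow> 'a::{field,finite}"
  assumes F: "subfield F" and "finite K" "k \<notin> K" "lin_indep_over F x K" "v \<notin> span_over F x K"
  shows "lin_indep_over F (x(k := v)) (insert k K)"
proof -
  have "span_over F (x(k := v)) K = span_over F x K" using assms(3) by (intro span_over_cong) auto
  moreover have "lin_indep_over F (x(k := v)) K \<longleftrightarrow> lin_indep_over F x K"
    using assms(3) by (intro lin_indep_over_cong) auto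
  ultimately show ?thesis using assms(2,4,5) by (intro lin_indep_over_insert[OF F]) auto
qed

lemma card_Un_atLeastLessThan:
  assumes "finite J" "J \<subseteq> {..<N}"
  shows "card (J \<union> {N..<N + m}) = card J + m"
  using assms by (subst card_Un_disjoint) auto

lemma lin_indep_over_extend_spanning:
  fixes x :: "nat \<Rightarrow> 'a::{field,finite}"
  assumes F: "subfield F" and J: "finite J" "J \<subseteq> {..<N}" and indep: "lin_indep_over F x J"
  obtains x' m where "\<forall>j\<in>J. x' j = x j" "lin_indep_over F x' (J \<union> {N..<N + m})"
    "span_over F x' (J \<union> {N..<N + m}) = UNIV"
proof -
  define P where "P m \<longleftrightarrow> (\<exists>x'. (\<forall>j\<in>J. x' j = x j) \<and> lin_indep_over F x' (J \<union> {N..<N + m}))"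
    for m
  have "P 0" using indep unfolding P_def by auto
  moreover have "m < card (UNIV :: 'a set)" if "P m" for m
  proof -
    obtain x' where "lin_indep_over F x' (J \<union> {N..<N + m})" using \<open>P m\<close> unfolding P_def by blast
    then have "card (J \<union> {N..<N + m}) < card (UNIV :: 'a set)"
      using J(1) by (intro lin_indep_over_card_less[OF F]) simp_all
    then show ?thesis using card_Un_atLeastLessThan[OF J] by simp
  qed
  ultimately have "\<exists>m. P m \<and> (\<forall>m'. P m' \<longrightarrow> id m' \<le> id m)"
    by (intro ex_has_greatest_nat[of P 0 id "card (UNIV :: 'a set)"]) simp_all
  then obtain m where "P m" and m_max: "\<And>m'. P m' \<Longrightarrow> m' \<le> m" by auto
  then obtain x' where x': "\<forall>j\<in>J. x' j = x j" "lin_indep_over F x' (J \<union> {N..<N + m})"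
    unfolding P_def by blast
  have "span_over F x' (J \<union> {N..<N + m}) = UNIV"
  proof (rule ccontr)
    let ?K = "J \<union> {N..<N + m}"
    assume "span_over F x' ?K \<noteq> UNIV"
    then obtain v where v: "v \<notin> span_over F x' ?K" by blast
    let ?x = "x'(N + m := v)"
    have new: "N + m \<notin> ?K" using J(2) by auto
    have "lin_indep_over F ?x (insert (N + m) ?K)"
      using J(1) new x'(2) v by (intro lin_indep_over_fun_upd[OF F]) simp_all
    moreover have "insert (N + m) ?K = J \<union> {N..<N + Suc m}" by auto
    ultimately have "lin_indep_over F ?x (J \<union> {N..<N + Suc m})" by (simp only:)
    moreover have "\<forall>j\<in>J. ?x j = x j" using x'(1) new by auto
    ultimately have "P (Suc m)" unfolding P_def by blast
    then show False using m_max[of "Suc m"] by simp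
  qed
  then show ?thesis using that x' by blast
qed

lemma obtain_basis_coordinates:
  fixes x :: "nat \<Rightarrow> 'a::{field,finite}"
  assumes F: "subfield F" and x: "lin_indep_over F x K" "span_over F x K = UNIV"
  obtains coords where "\<And>a. coords a \<in> K \<rightarrow>\<^sub>E F" "\<And>a. (\<Sum>k\<in>K. coords a k * x k) = a"
    "\<And>c. c \<in> K \<rightarrow>\<^sub>E F \<Longrightarrow> coords (\<Sum>k\<in>K. c k * x k) = c"
    "\<And>a b. coords (a + b) = (\<lambda>k\<in>K. coords a k + coords b k)"
    "\<And>t a. t \<in> F \<Longrightarrow> coords (t * a) = (\<lambda>k\<in>K. t * coords a k)"
proof -
  let ?C = "K \<rightarrow>\<^sub>E F" and ?comb = "\<lambda>c. \<Sum>k\<in>K. c k * x k"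
  define coords where "coords = the_inv_into ?C ?comb"
  have inj: "inj_on ?comb ?C" using x(1) lin_indep_over_iff_inj_on[OF F] by blast
  have onto: "?comb ` ?C = UNIV" using x(2) unfolding span_over_eq_image .
  have C: "coords a \<in> ?C" for a unfolding coords_def using the_inv_into_into[OF inj] onto by blast
  have comb: "?comb (coords a) = a" for a
    unfolding coords_def using f_the_inv_into_f[OF inj] onto by blast
  have unique: "coords (?comb c) = c" if "c \<in> ?C" for c
    unfolding coords_def using the_inv_into_f_f[OF inj that] .
  have "coords (a + b) = (\<lambda>k\<in>K. coords a k + coords b k)" for a b
  proof -
    have eq: "a + b = ?comb (\<lambda>k\<in>K. coords a k + coords b k)"
      using comb[of a] comb[of b] by (simp add: sum.distrib distrib_right cong: sum.cong)
    have "(\<lambda>k\<in>K. coords a k + coords b k) \<in> ?C"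
      using C[of a] C[of b] subfield_add[OF F] by auto
    then show ?thesis unfolding eq by (rule unique)
  qed
  moreover have "coords (t * a) = (\<lambda>k\<in>K. t * coords a k)" if "t \<in> F" for t a
  proof -
    have "?comb (\<lambda>k\<in>K. t * coords a k) = t * ?comb (coords a)"
      by (simp add: sum_distrib_left mult.assoc cong: sum.cong)
    then have eq: "t * a = ?comb (\<lambda>k\<in>K. t * coords a k)" using comb[of a] by simp
    have "(\<lambda>k\<in>K. t * coords a k) \<in> ?C" using C[of a] subfield_mult[OF F that] by auto
    then show ?thesis unfolding eq by (rule unique)
  qed
  ultimately show ?thesis using that C comb unique by blast
qed

lemma obtain_linear_map_on_basis:
  fixes x y :: "nat \<Rightarrow> 'a::{field,finite}"
  assumes F: "subfield F" and "finite K"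
    and x: "lin_indep_over F x K" "span_over F x K = UNIV" and y: "lin_indep_over F y K"
  obtains \<phi> where "linear_over F \<phi>" "inj \<phi>" "\<forall>k\<in>K. \<phi> (x k) = y k"
proof -
  obtain coords where coords: "\<And>a. coords a \<in> K \<rightarrow>\<^sub>E F" "\<And>a. (\<Sum>k\<in>K. coords a k * x k) = a"
    "\<And>c. c \<in> K \<rightarrow>\<^sub>E F \<Longrightarrow> coords (\<Sum>k\<in>K. c k * x k) = c"
    "\<And>a b. coords (a + b) = (\<lambda>k\<in>K. coords a k + coords b k)"
    "\<And>t a. t \<in> F \<Longrightarrow> coords (t * a) = (\<lambda>k\<in>K. t * coords a k)"
    using obtain_basis_coordinates[OF F x] by blast
  define \<phi> where "\<phi> a = (\<Sum>k\<in>K. coords a k * y k)" for a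
  have "\<phi> (a + b) = \<phi> a + \<phi> b" for a b
    unfolding \<phi>_def coords(4) by (simp add: sum.distrib distrib_right cong: sum.cong)
  moreover have "\<phi> (t * a) = t * \<phi> a" if "t \<in> F" for t a
    unfolding \<phi>_def coords(5)[OF that] by (simp add: sum_distrib_left mult.assoc cong: sum.cong)
  ultimately have "linear_over F \<phi>" unfolding linear_over_def by blast
  moreover have "inj \<phi>"
  proof (rule injI)
    fix a b assume "\<phi> a = \<phi> b"
    moreover have "inj_on (\<lambda>c. \<Sum>k\<in>K. c k * y k) (K \<rightarrow>\<^sub>E F)"
      using y lin_indep_over_iff_inj_on[OF F] by blast
    ultimately have "coords a = coords b" using coords(1) unfolding \<phi>_def by (blast dest: inj_onD)
    then show "a = b" using coords(2) by metis
  qed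
  moreover have "\<phi> (x k) = y k" if "k \<in> K" for k
  proof -
    let ?e = "\<lambda>l\<in>K. if l = k then 1 else 0"
    have delta: "(\<Sum>l\<in>K. ?e l * z l) = z k" for z :: "nat \<Rightarrow> 'a"
    proof -
      have "(\<Sum>l\<in>K. ?e l * z l) = (\<Sum>l\<in>K. if l = k then z l else 0)" by (rule sum.cong) auto
      then show ?thesis using assms(2) that by simp
    qed
    have "?e \<in> K \<rightarrow>\<^sub>E F" using subfield_0[OF F] subfield_1[OF F] by auto
    then have "coords (x k) = ?e" using coords(3) delta by metis
    then show ?thesis unfolding \<phi>_def using delta by simp
  qed
  ultimately show ?thesis using that by blast
qed

lemma obtain_linear_map_extending:
  fixes x y :: "nat \<Rightarrow> 'a::{field,finite}"
  assumes F: "subfield F" and J: "finite J"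
    and x: "lin_indep_over F x J" and y: "lin_indep_over F y J"
  obtains \<phi> where "linear_over F \<phi>" "inj \<phi>" "\<forall>j\<in>J. \<phi> (x j) = y j"
proof -
  define N where "N = Suc (Max J)"
  have N: "J \<subseteq> {..<N}" using J by (auto simp: N_def less_Suc_eq_le)
  have dim: "card F ^ (card J + m) = card (UNIV :: 'a set)"
    if "lin_indep_over F z (J \<union> {N..<N + m})" "span_over F z (J \<union> {N..<N + m}) = UNIV" for z m
    using that J N card_Un_atLeastLessThan[OF J N] by (simp add: lin_indep_over_iff_card_span[OF F])
  obtain x' m where x': "\<forall>j\<in>J. x' j = x j" "lin_indep_over F x' (J \<union> {N..<N + m})"
    "span_over F x' (J \<union> {N..<N + m}) = UNIV"
    using lin_indep_over_extend_spanning[OF F J N x] by blast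
  obtain y' where y': "\<forall>j\<in>J. y' j = y j" "lin_indep_over F y' (J \<union> {N..<N + m})"
  proof -
    obtain y' m' where "\<forall>j\<in>J. y' j = y j" "lin_indep_over F y' (J \<union> {N..<N + m'})"
      "span_over F y' (J \<union> {N..<N + m'}) = UNIV"
      using lin_indep_over_extend_spanning[OF F J N y] by blast
    moreover from this have "card F ^ (card J + m') = card F ^ (card J + m)"
      using dim x'(2,3) by simp
    then have "m' = m" using power_inject_exp[OF subfield_card_gt_1[OF F]] by simp
    ultimately show thesis using that by blast
  qed
  obtain \<phi> where \<phi>: "linear_over F \<phi>" "inj \<phi>" "\<forall>k\<in>J \<union> {N..<N + m}. \<phi> (x' k) = y' k"
    using obtain_linear_map_on_basis[OF F _ x'(2,3) y'(2)] J by blast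
  have "\<forall>j\<in>J. \<phi> (x j) = y j" using \<phi>(3) x'(1) y'(1) by (metis UnI1)
  then show ?thesis using that \<phi>(1,2) by blast
qed

lemma obtain_permutation_mapping:
  assumes "finite S" "A \<subseteq> S" "B \<subseteq> S" "card A = card B"
  obtains \<pi> where "bij_betw \<pi> S S" "\<pi> ` A = B"
proof -
  have fin: "finite A" "finite B" "finite (S - A)" "finite (S - B)"
    using assms(1-3) finite_subset by blast+
  obtain f where f: "bij_betw f A B" using finite_same_card_bij[OF fin(1,2) assms(4)] by blast
  have "card (S - A) = card (S - B)" using assms by (simp add: card_Diff_subset fin)
  then obtain g where g: "bij_betw g (S - A) (S - B)"
    using finite_same_card_bij[OF fin(3,4)] by blast
  define \<pi> where "\<pi> i = (if i \<in> A then f i else g i)" for i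
  have "bij_betw \<pi> A B" using f by (rule bij_betw_cong[THEN iffD1, rotated]) (simp add: \<pi>_def)
  moreover have "bij_betw \<pi> (S - A) (S - B)"
    using g by (rule bij_betw_cong[THEN iffD1, rotated]) (simp add: \<pi>_def)
  ultimately have "bij_betw \<pi> (A \<union> (S - A)) (B \<union> (S - B))" by (rule bij_betw_combine) blast
  moreover have "A \<union> (S - A) = S" "B \<union> (S - B) = S" using assms(2,3) by blast+
  ultimately show ?thesis using that \<open>bij_betw \<pi> A B\<close> bij_betw_imp_surj_on by metis
qed

section \<open>Rank isometries and lenses\<close>

lemma finite_vecs: "finite (vecs n :: (nat \<Rightarrow> 'a::finite) set)"
  unfolding vecs_def by (intro finite_PiE) auto

lemma card_rank_ball_inter_isometry:
  fixes T :: "(nat \<Rightarrow> 'a::{field,finite}) \<Rightarrow> nat \<Rightarrow> 'a"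
  assumes F: "subfield F" and T: "T ` vecs n \<subseteq> vecs n"
    and dist: "\<And>x y. x \<in> vecs n \<Longrightarrow> y \<in> vecs n \<Longrightarrow> rank_dist F n (T x) (T y) = rank_dist F n x y"
    and c: "c1 \<in> vecs n" "c2 \<in> vecs n"
  shows "card (rank_ball F n r (T c1) \<inter> rank_ball F n s (T c2))
    = card (rank_ball F n r c1 \<inter> rank_ball F n s c2)"
proof -
  have inj: "inj_on T (vecs n)"
  proof (rule inj_onI)
    fix x y assume xy: "x \<in> vecs n" "y \<in> vecs n" "T x = T y"
    then have "rank_dist F n (T x) (T y) = 0" using T rank_dist_eq_0_iff[OF F] by blast
    then show "x = y" using dist xy(1,2) rank_dist_eq_0_iff[OF F] by metis
  qed
  have onto: "T ` vecs n = vecs n" by (rule endo_inj_surj[OF finite_vecs T inj])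
  have "T ` (rank_ball F n r c1 \<inter> rank_ball F n s c2)
      = rank_ball F n r (T c1) \<inter> rank_ball F n s (T c2)"
  proof (intro equalityI subsetI)
    fix z assume "z \<in> T ` (rank_ball F n r c1 \<inter> rank_ball F n s c2)"
    then show "z \<in> rank_ball F n r (T c1) \<inter> rank_ball F n s (T c2)"
      using T dist c unfolding rank_ball_def by auto
  next
    fix z assume z: "z \<in> rank_ball F n r (T c1) \<inter> rank_ball F n s (T c2)"
    then obtain y where "y \<in> vecs n" "z = T y" using onto unfolding rank_ball_def by blast
    then show "z \<in> T ` (rank_ball F n r c1 \<inter> rank_ball F n s c2)"
      using z dist c unfolding rank_ball_def by auto
  qed
  moreover have "inj_on T (rank_ball F n r c1 \<inter> rank_ball F n s c2)"
    by (rule inj_on_subset[OF inj]) (auto simp: rank_ball_def)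
  ultimately show ?thesis by (metis card_image)
qed

definition rank_lens :: "'a::field set \<Rightarrow> nat \<Rightarrow> nat \<Rightarrow> nat \<Rightarrow> (nat \<Rightarrow> 'a) \<Rightarrow> (nat \<Rightarrow> 'a) set" where
  "rank_lens F n r s u = {y \<in> vecs n. rk F n y \<le> r \<and> rk F n (\<lambda>i. y i - u i) \<le> s}"

lemma rank_ball_zero_inter_eq_lens:
  fixes u :: "nat \<Rightarrow> 'a::{field,finite}"
  assumes F: "subfield F"
  shows "rank_ball F n r (\<lambda>i\<in>{..<n}. 0) \<inter> rank_ball F n s u = rank_lens F n r s u"
proof -
  have "rank_dist F n (\<lambda>i\<in>{..<n}. 0) y = rk F n y" for y :: "nat \<Rightarrow> 'a"
  proof -
    have "rank_dist F n (\<lambda>i\<in>{..<n}. 0) y = rk F n (\<lambda>i. - y i)"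
      unfolding rank_dist_def by (rule rk_cong[OF F]) simp
    then show ?thesis using rk_uminus[OF F] by simp
  qed
  moreover have "rank_dist F n u y = rk F n (\<lambda>i. y i - u i)" for y
    using rank_dist_commute[OF F] unfolding rank_dist_def by metis
  ultimately show ?thesis unfolding rank_ball_def rank_lens_def by auto
qed

lemma card_rank_ball_inter_eq_card_lens:
  fixes c1 c2 :: "nat \<Rightarrow> 'a::{field,finite}"
  assumes F: "subfield F" and c: "c1 \<in> vecs n" "c2 \<in> vecs n"
  shows "card (rank_ball F n r c1 \<inter> rank_ball F n s c2)
    = card (rank_lens F n r s (\<lambda>i\<in>{..<n}. c2 i - c1 i))"
proof -
  define T where "T y = (\<lambda>i\<in>{..<n}. y i - c1 i)" for y :: "nat \<Rightarrow> 'a"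
  have T_vecs: "T ` vecs n \<subseteq> vecs n"
    unfolding T_def vecs_def by (intro image_subsetI) (simp add: restrict_PiE_iff)
  have T_dist: "rank_dist F n (T x) (T y) = rank_dist F n x y" for x y
    unfolding rank_dist_def T_def by (rule rk_cong[OF F]) simp
  have "T c1 = (\<lambda>i\<in>{..<n}. 0)" unfolding T_def by (intro restrict_ext) simp
  moreover have "card (rank_ball F n r (T c1) \<inter> rank_ball F n s (T c2))
      = card (rank_ball F n r c1 \<inter> rank_ball F n s c2)"
    using T_dist by (intro card_rank_ball_inter_isometry[OF F T_vecs _ c])
  ultimately have "card (rank_ball F n r c1 \<inter> rank_ball F n s c2)
      = card (rank_ball F n r (\<lambda>i\<in>{..<n}. 0) \<inter> rank_ball F n s (T c2))" by simp
  also have "\<dots> = card (rank_lens F n r s (T c2))" by (simp only: rank_ball_zero_inter_eq_lens[OF F])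
  finally show ?thesis unfolding T_def .
qed

section \<open>Counting along one coordinate\<close>

lemma vecs_fun_upd: "z \<in> vecs n \<Longrightarrow> j < n \<Longrightarrow> z(j := a) \<in> vecs n"
  unfolding vecs_def by (auto simp: PiE_iff extensional_def)

lemma card_subset_vecs_eq_sum_fibres:
  fixes S :: "(nat \<Rightarrow> 'a::{zero,finite}) set"
  assumes "S \<subseteq> vecs n" "j < n"
  shows "card S = (\<Sum>z\<in>{z \<in> vecs n. z j = 0}. card {a. z(j := a) \<in> S})"
proof -
  let ?Z = "{z \<in> vecs n. z j = (0::'a)}"
  let ?glue = "\<lambda>(z, a). z(j := a)"
  have glue: "S = ?glue ` (SIGMA z:?Z. {a. z(j := a) \<in> S})"
  proof (intro equalityI subsetI)
    fix y assume "y \<in> S"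
    then have "y \<in> vecs n" using assms(1) by blast
    then have "y(j := 0) \<in> ?Z" using vecs_fun_upd[OF _ assms(2)] by simp
    moreover have "(y(j := 0))(j := y j) \<in> S" using \<open>y \<in> S\<close> by simp
    ultimately have "(y(j := 0), y j) \<in> (SIGMA z:?Z. {a. z(j := a) \<in> S})" by blast
    then show "y \<in> ?glue ` (SIGMA z:?Z. {a. z(j := a) \<in> S})"
      by (rule rev_image_eqI) simp
  qed auto
  have "inj_on ?glue (SIGMA z:?Z. {a. z(j := a) \<in> S})"
  proof (rule inj_onI, clarify)
    fix z a z' a' assume "z j = 0" "z' j = 0" and eq: "z(j := a) = z'(j := a')"
    have "z i = z' i" for i
      using fun_cong[OF eq, of i] \<open>z j = 0\<close> \<open>z' j = 0\<close> by (cases "i = j") auto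
    moreover have "a = a'" using fun_cong[OF eq, of j] by simp
    ultimately show "z = z' \<and> a = a'" by blast
  qed
  then have "card S = card (SIGMA z:?Z. {a. z(j := a) \<in> S})" by (subst glue) (rule card_image)
  also have "\<dots> = (\<Sum>z\<in>?Z. card {a. z(j := a) \<in> S})"
    by (rule card_SigmaI) (auto intro: finite_subset[OF _ finite_vecs])
  finally show ?thesis .
qed

lemma card_shifted_fibre_le:
  fixes W W' :: "'a::{field,finite} set"
  assumes F: "subfield F" and W: "subspace_over F W" and W': "subspace_over F W'"
  shows "card {x. R \<and> (P \<or> x \<in> W) \<and> R' \<and> (Q \<or> x - a \<in> W')}
    \<le> card {x. R \<and> (P \<or> x \<in> W) \<and> R' \<and> (Q \<or> x \<in> W')}"
proof (cases "\<exists>x0. R \<and> (P \<or> x0 \<in> W) \<and> R' \<and> (Q \<or> x0 - a \<in> W')")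
  case True
  then obtain x0 where x0: "R" "P \<or> x0 \<in> W" "R'" "Q \<or> x0 - a \<in> W'" by blast
  show ?thesis
  proof (rule card_inj_on_le[where f = "\<lambda>x. x - x0"])
    show "(\<lambda>x. x - x0) ` {x. R \<and> (P \<or> x \<in> W) \<and> R' \<and> (Q \<or> x - a \<in> W')}
        \<subseteq> {x. R \<and> (P \<or> x \<in> W) \<and> R' \<and> (Q \<or> x \<in> W')}"
    proof (rule image_subsetI)
      fix x assume "x \<in> {x. R \<and> (P \<or> x \<in> W) \<and> R' \<and> (Q \<or> x - a \<in> W')}"
      then have x: "P \<or> x \<in> W" "Q \<or> x - a \<in> W'" by blast+
      have "P \<or> x - x0 \<in> W" using x(1) x0(2) subspace_over_diff[OF F W] by blast
      moreover have "Q \<or> (x - a) - (x0 - a) \<in> W'"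
        using x(2) x0(4) subspace_over_diff[OF F W'] by blast
      ultimately show "x - x0 \<in> {x. R \<and> (P \<or> x \<in> W) \<and> R' \<and> (Q \<or> x \<in> W')}" using x0(1,3) by simp
    qed
  qed (auto simp: inj_on_def)
next
  case False
  then have "{x. R \<and> (P \<or> x \<in> W) \<and> R' \<and> (Q \<or> x - a \<in> W')} = {}" by blast
  then show ?thesis by (metis card.empty le0)
qed

lemma card_shifted_fibre_ge:
  fixes W W' :: "'a::{field,finite} set"
  assumes F: "subfield F" and W: "subspace_over F W" and W': "subspace_over F W'"
    and a: "w \<in> W" "w' \<in> W'" "a = w + w'"
  shows "card {x. R \<and> (P \<or> x \<in> W) \<and> R' \<and> (Q \<or> x \<in> W')}
    \<le> card {x. R \<and> (P \<or> x \<in> W) \<and> R' \<and> (Q \<or> x - a \<in> W')}"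
proof (rule card_inj_on_le[where f = "\<lambda>x. x + w"])
  show "(\<lambda>x. x + w) ` {x. R \<and> (P \<or> x \<in> W) \<and> R' \<and> (Q \<or> x \<in> W')}
      \<subseteq> {x. R \<and> (P \<or> x \<in> W) \<and> R' \<and> (Q \<or> x - a \<in> W')}"
  proof (rule image_subsetI)
    fix x assume "x \<in> {x. R \<and> (P \<or> x \<in> W) \<and> R' \<and> (Q \<or> x \<in> W')}"
    then have x: "R" "P \<or> x \<in> W" "R'" "Q \<or> x \<in> W'" by blast+
    have "P \<or> x + w \<in> W" using x(2) a(1) subspace_over_add[OF W] by blast
    moreover have "Q \<or> x - w' \<in> W'" using x(4) a(2) subspace_over_diff[OF F W'] by blast
    moreover have "x - w' = x + w - a" using a(3) by simp
    ultimately show "x + w \<in> {x. R \<and> (P \<or> x \<in> W) \<and> R' \<and> (Q \<or> x - a \<in> W')}"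
      using x(1,3) by simp
  qed
qed (auto simp: inj_on_def)

lemma obtain_span_over_split:
  assumes F: "subfield F" and "a \<in> span_over F p I"
  obtains w w' where "w \<in> span_over F z I" "w' \<in> span_over F (\<lambda>i. z i - p i) I" "a = w + w'"
proof -
  obtain c where c: "a = (\<Sum>i\<in>I. c i * p i)" "\<forall>i\<in>I. c i \<in> F"
    using assms(2) unfolding span_over_def by blast
  let ?w = "\<Sum>i\<in>I. c i * z i" and ?w' = "\<Sum>i\<in>I. (- c i) * (z i - p i)"
  have "?w \<in> span_over F z I" unfolding span_over_def using c(2) by blast
  moreover have "?w' \<in> span_over F (\<lambda>i. z i - p i) I"
    unfolding span_over_def using c(2) subfield_uminus[OF F]
    by (intro CollectI exI[of _ "\<lambda>i. - c i"]) simp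
  moreover have "a = ?w + ?w'"
    unfolding c(1) sum.distrib[symmetric] by (rule sum.cong) (simp_all add: algebra_simps)
  ultimately show ?thesis using that by blast
qed

lemma fun_upd_mem_rank_lens_iff:
  fixes z p :: "nat \<Rightarrow> 'a::{field,finite}"
  assumes F: "subfield F" and j: "j < n" and z: "z \<in> vecs n" "z j = 0" and p: "p j = 0"
  shows "z(j := x) \<in> rank_lens F n r s (p(j := b)) \<longleftrightarrow>
    rk F n z \<le> r \<and> (rk F n z < r \<or> x \<in> span_over F z {..<n}) \<and>
    rk F n (\<lambda>i. z i - p i) \<le> s \<and>
    (rk F n (\<lambda>i. z i - p i) < s \<or> x - b \<in> span_over F (\<lambda>i. z i - p i) {..<n})"
proof -
  have bound: "k + of_bool (\<not> P) \<le> m \<longleftrightarrow> k \<le> m \<and> (k < m \<or> P)" for k m :: nat and P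
    by (cases P) auto
  have "(\<lambda>i. (z(j := x)) i - (p(j := b)) i) = (\<lambda>i. z i - p i)(j := x - b)" by (rule ext) simp
  moreover have "z(j := x) \<in> vecs n" using z by (simp add: vecs_fun_upd j)
  ultimately show ?thesis using z p unfolding rank_lens_def by (simp add: rk_fun_upd[OF F j] bound)
qed

lemma
  fixes p :: "nat \<Rightarrow> 'a::{field,finite}"
  assumes F: "subfield F" and j: "j < n" and p: "p j = 0"
  shows card_lens_update_le_zero:
      "card (rank_lens F n r s (p(j := a))) \<le> card (rank_lens F n r s p)"
    and card_lens_le_update_spanned:
      "a \<in> span_over F p {..<n} \<Longrightarrow> card (rank_lens F n r s p) \<le> card (rank_lens F n r s (p(j := a)))"
proof -
  let ?Z = "{z \<in> vecs n. z j = (0::'a)}"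
  define W where "W z = span_over F z {..<n}" for z :: "nat \<Rightarrow> 'a"
  define W' where "W' z = span_over F (\<lambda>i. z i - p i) {..<n}" for z
  define fibre where "fibre z b = {x. rk F n z \<le> r \<and> (rk F n z < r \<or> x \<in> W z)
      \<and> rk F n (\<lambda>i. z i - p i) \<le> s \<and> (rk F n (\<lambda>i. z i - p i) < s \<or> x - b \<in> W' z)}" for z b
  have count: "card (rank_lens F n r s (p(j := b))) = (\<Sum>z\<in>?Z. card (fibre z b))" for b
  proof -
    have "rank_lens F n r s (p(j := b)) \<subseteq> vecs n" unfolding rank_lens_def by blast
    then have "card (rank_lens F n r s (p(j := b)))
        = (\<Sum>z\<in>?Z. card {x. z(j := x) \<in> rank_lens F n r s (p(j := b))})"
      by (rule card_subset_vecs_eq_sum_fibres[OF _ j])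
    also have "\<dots> = (\<Sum>z\<in>?Z. card (fibre z b))"
      using p by (intro sum.cong refl)
        (simp add: fun_upd_mem_rank_lens_iff[OF F j] fibre_def W_def W'_def)
    finally show ?thesis .
  qed
  have subspaces: "subspace_over F (W z)" "subspace_over F (W' z)" for z
    unfolding W_def W'_def by (simp_all add: span_over_subspace[OF F])
  have p0: "p(j := 0) = p" using p by auto
  have "card (fibre z a) \<le> card (fibre z 0)" for z
    unfolding fibre_def using card_shifted_fibre_le[OF F subspaces] by simp
  then show "card (rank_lens F n r s (p(j := a))) \<le> card (rank_lens F n r s p)"
    using count[of a] count[of 0] p0 by (simp add: sum_mono)
  assume a: "a \<in> span_over F p {..<n}"
  have "card (fibre z 0) \<le> card (fibre z a)" for z
  proof -
    obtain w w' where "w \<in> W z" "w' \<in> W' z" "a = w + w'"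
      using obtain_span_over_split[OF F a, of z] unfolding W_def W'_def by blast
    then show ?thesis
      unfolding fibre_def using card_shifted_fibre_ge[OF F subspaces] by simp
  qed
  then show "card (rank_lens F n r s p) \<le> card (rank_lens F n r s (p(j := a)))"
    using count[of a] count[of 0] p0 by (simp add: sum_mono)
qed

section \<open>Reduction to independent supports\<close>

definition zero_on :: "nat set \<Rightarrow> (nat \<Rightarrow> 'a::zero) \<Rightarrow> nat \<Rightarrow> 'a" where
  "zero_on D u = (\<lambda>i. if i \<in> D then 0 else u i)"

lemma zero_on_insert: "j \<notin> D \<Longrightarrow> zero_on (insert j D) u = (zero_on D u)(j := 0)"
  unfolding zero_on_def by (rule ext) simp

lemma card_lens_le_zero_on:
  fixes u :: "nat \<Rightarrow> 'a::{field,finite}"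
  assumes F: "subfield F" and "finite D" "D \<subseteq> {..<n}"
  shows "card (rank_lens F n r s u) \<le> card (rank_lens F n r s (zero_on D u))"
  using assms(2,3)
proof (induction D)
  case empty
  then show ?case by (simp add: zero_on_def)
next
  case (insert j D)
  let ?p = "(zero_on D u)(j := 0)"
  have p: "?p = zero_on (insert j D) u" "?p(j := zero_on D u j) = zero_on D u"
    using insert.hyps(2) by (simp_all add: zero_on_insert)
  have "card (rank_lens F n r s (?p(j := zero_on D u j))) \<le> card (rank_lens F n r s ?p)"
    using insert.prems by (intro card_lens_update_le_zero[OF F]) simp_all
  then have "card (rank_lens F n r s (zero_on D u))
      \<le> card (rank_lens F n r s (zero_on (insert j D) u))"
    unfolding p(2) unfolding p(1) .
  moreover have "card (rank_lens F n r s u) \<le> card (rank_lens F n r s (zero_on D u))"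
    using insert.IH insert.prems by simp
  ultimately show ?case by (rule le_trans[rotated])
qed

lemma card_lens_zero_on_spanned:
  fixes u :: "nat \<Rightarrow> 'a::{field,finite}"
  assumes F: "subfield F" and "finite D" "D \<subseteq> {..<n}" and J: "J \<subseteq> {..<n}" "D \<inter> J = {}"
    and spanned: "\<forall>j\<in>D. u j \<in> span_over F u J"
  shows "card (rank_lens F n r s (zero_on D u)) = card (rank_lens F n r s u)"
  using assms(2-3) J(2) spanned
proof (induction D)
  case empty
  then show ?case by (simp add: zero_on_def)
next
  case (insert j D)
  let ?p = "(zero_on D u)(j := 0)"
  have p: "?p = zero_on (insert j D) u" "?p(j := zero_on D u j) = zero_on D u"
    using insert.hyps(2) by (simp_all add: zero_on_insert)
  have "span_over F u J = span_over F ?p J"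
    using insert.prems(2) by (intro span_over_cong) (auto simp: zero_on_def)
  also have "\<dots> \<subseteq> span_over F ?p {..<n}" by (rule span_over_mono[OF F J(1)]) simp
  finally have "u j \<in> span_over F ?p {..<n}" using insert.prems(3) by blast
  moreover have "zero_on D u j = u j" using insert.hyps(2) by (simp add: zero_on_def)
  ultimately have "card (rank_lens F n r s ?p) \<le> card (rank_lens F n r s (?p(j := zero_on D u j)))"
    using insert.prems(1) by (intro card_lens_le_update_spanned[OF F]) simp_all
  moreover have "card (rank_lens F n r s (?p(j := zero_on D u j))) \<le> card (rank_lens F n r s ?p)"
    using insert.prems(1) by (intro card_lens_update_le_zero[OF F]) simp_all
  ultimately have "card (rank_lens F n r s (zero_on (insert j D) u))
      = card (rank_lens F n r s (zero_on D u))"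
    unfolding p(2) unfolding p(1) by (rule antisym)
  moreover have "card (rank_lens F n r s (zero_on D u)) = card (rank_lens F n r s u)"
    using insert.IH insert.prems by simp
  ultimately show ?case by simp
qed

lemma card_lens_linear_permute:
  fixes u :: "nat \<Rightarrow> 'a::{field,finite}"
  assumes F: "subfield F" and \<phi>: "linear_over F \<phi>" "inj \<phi>" and \<pi>: "bij_betw \<pi> {..<n} {..<n}"
    and u: "u \<in> vecs n"
  shows "card (rank_lens F n r s (\<lambda>i\<in>{..<n}. \<phi> (u (\<pi> i)))) = card (rank_lens F n r s u)"
proof -
  define T where "T y = (\<lambda>i\<in>{..<n}. \<phi> (y (\<pi> i)))" for y
  have T_vecs: "T ` vecs n \<subseteq> vecs n"
    unfolding T_def vecs_def by (intro image_subsetI) (simp add: restrict_PiE_iff)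
  have T_dist: "rank_dist F n (T x) (T y) = rank_dist F n x y" for x y
  proof -
    have "rank_dist F n (T x) (T y) = rk F n (\<lambda>i. \<phi> ((\<lambda>k. x k - y k) (\<pi> i)))"
      unfolding rank_dist_def T_def by (rule rk_cong[OF F]) (simp add: linear_over_diff[OF \<phi>(1)])
    also have "\<dots> = rk F n (\<lambda>i. (\<lambda>k. x k - y k) (\<pi> i))" by (rule rk_linear_image[OF F \<phi>])
    also have "\<dots> = rank_dist F n x y" unfolding rank_dist_def by (rule rk_permute[OF F \<pi>])
    finally show ?thesis .
  qed
  have "T (\<lambda>i\<in>{..<n}. 0) = (\<lambda>i\<in>{..<n}. 0)"
    unfolding T_def using \<pi> linear_over_0[OF \<phi>(1)] by (intro restrict_ext) (auto dest: bij_betwE)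
  then have "card (rank_lens F n r s u) = card (rank_lens F n r s (T u))"
    using card_rank_ball_inter_isometry[OF F T_vecs _ _ u, of "\<lambda>i\<in>{..<n}. 0" r s] T_dist
    by (simp add: rank_ball_zero_inter_eq_lens[OF F] vecs_def)
  then show ?thesis unfolding T_def by simp
qed

lemma card_lens_eq_if_independent_support:
  fixes u v :: "nat \<Rightarrow> 'a::{field,finite}"
  assumes F: "subfield F" and vecs: "u \<in> vecs n" "v \<in> vecs n"
    and I: "I \<subseteq> {..<n}" "lin_indep_over F u I" "\<forall>i\<in>{..<n} - I. u i = 0"
    and J: "J \<subseteq> {..<n}" "lin_indep_over F v J" "\<forall>j\<in>{..<n} - J. v j = 0"
    and "card I = card J"
  shows "card (rank_lens F n r s u) = card (rank_lens F n r s v)"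
proof -
  obtain \<pi> where \<pi>: "bij_betw \<pi> {..<n} {..<n}" "\<pi> ` J = I"
    using obtain_permutation_mapping[of "{..<n}" J I] I(1) J(1) \<open>card I = card J\<close> by auto
  have fin: "finite J" using J(1) finite_subset by blast
  have inj_J: "inj_on \<pi> J" using bij_betw_imp_inj_on[OF \<pi>(1)] J(1) inj_on_subset by blast
  have "lin_indep_over F (\<lambda>j. u (\<pi> j)) J"
    using I(2) \<pi>(2) lin_indep_over_reindex[OF F fin inj_J] by simp
  then obtain \<phi> where \<phi>: "linear_over F \<phi>" "inj \<phi>" "\<forall>j\<in>J. \<phi> (u (\<pi> j)) = v j"
    using obtain_linear_map_extending[OF F fin _ J(2)] by blast
  have "(\<lambda>i\<in>{..<n}. \<phi> (u (\<pi> i))) = v"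
  proof
    fix i show "(\<lambda>i\<in>{..<n}. \<phi> (u (\<pi> i))) i = v i"
    proof (cases "i < n")
      case True
      show ?thesis
      proof (cases "i \<in> J")
        case False
        then have "\<pi> i \<notin> I"
          using True \<pi> bij_betw_imp_inj_on[OF \<pi>(1)] J(1) by (auto simp: inj_on_def)
        moreover have "\<pi> i < n" using True \<pi>(1) by (auto dest: bij_betwE)
        ultimately show ?thesis using True False I(3) J(3) linear_over_0[OF \<phi>(1)] by simp
      qed (use True \<phi>(3) in simp)
    next
      case False
      then show ?thesis using vecs(2) by (simp add: vecs_def PiE_def extensional_def)
    qed
  qed
  then show ?thesis using card_lens_linear_permute[OF F \<phi>(1,2) \<pi>(1) vecs(1)] by simp
qed

lemma card_lens_antimono_rk:
  fixes u v :: "nat \<Rightarrow> 'a::{field,finite}"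
  assumes F: "subfield F" and vecs: "u \<in> vecs n" "v \<in> vecs n" and less: "rk F n v < rk F n u"
  shows "card (rank_lens F n r s u) \<le> card (rank_lens F n r s v)"
proof -
  obtain I where I: "I \<subseteq> {..<n}" "lin_indep_over F u I" "card I = rk F n u"
    using rk_attained by blast
  obtain J where J: "J \<subseteq> {..<n}" "lin_indep_over F v J" "card J = rk F n v"
    "span_over F v J = span_over F v {..<n}"
    by (rule obtain_rk_basis[OF F])
  obtain I' where I': "I' \<subseteq> I" "card I' = card J"
    using obtain_subset_with_card_n[of "card J" I] less I(3) J(3) by auto
  have fin: "finite I" using I(1) finite_subset by blast
  let ?u = "zero_on ({..<n} - I') u" and ?v = "zero_on ({..<n} - J) v"
  have "card (rank_lens F n r s u) \<le> card (rank_lens F n r s ?u)"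
    by (rule card_lens_le_zero_on[OF F]) auto
  also have "\<dots> = card (rank_lens F n r s ?v)"
  proof (rule card_lens_eq_if_independent_support[OF F])
    show "?u \<in> vecs n" "?v \<in> vecs n"
      using vecs by (auto simp: vecs_def zero_on_def PiE_iff extensional_def)
    show "I' \<subseteq> {..<n}" using I(1) I'(1) by blast
    have "lin_indep_over F u I'" using lin_indep_over_subset[OF F fin I'(1) I(2)] .
    then show "lin_indep_over F ?u I'" by (subst lin_indep_over_cong) (auto simp: zero_on_def)
    show "lin_indep_over F ?v J" using J(2) by (subst lin_indep_over_cong) (auto simp: zero_on_def)
  qed (use J(1) I'(2) in \<open>auto simp: zero_on_def\<close>)
  also have "\<dots> = card (rank_lens F n r s v)"
    using J(1,4) span_over_mem[OF F, of "{..<n}"]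
    by (intro card_lens_zero_on_spanned[OF F]) auto
  finally show ?thesis .
qed

theorem proposition2:
  fixes F :: "'a::{field,finite} set"
    and n r s :: nat
    and c1 c2 c1' c2' :: "nat \<Rightarrow> 'a"
  assumes "subfield F"
    and "r \<le> n" and "s \<le> n"
    and "c1 \<in> vecs n" and "c2 \<in> vecs n" and "c1' \<in> vecs n" and "c2' \<in> vecs n"
    and "rank_dist F n c1 c2 > rank_dist F n c1' c2'"
  shows "card (rank_ball F n r c1 \<inter> rank_ball F n s c2)
           \<le> card (rank_ball F n r c1' \<inter> rank_ball F n s c2')"
proof -
  have rk_diff: "rk F n (\<lambda>i\<in>{..<n}. d i - c i) = rank_dist F n c d" for c d :: "nat \<Rightarrow> 'a"
  proof -
    have "rk F n (\<lambda>i\<in>{..<n}. d i - c i) = rank_dist F n d c"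
      unfolding rank_dist_def by (rule rk_cong[OF assms(1)]) simp
    then show ?thesis using rank_dist_commute[OF assms(1)] by simp
  qed
  have "card (rank_lens F n r s (\<lambda>i\<in>{..<n}. c2 i - c1 i))
      \<le> card (rank_lens F n r s (\<lambda>i\<in>{..<n}. c2' i - c1' i))"
    using assms(8) by (intro card_lens_antimono_rk[OF assms(1)]) (simp_all add: rk_diff vecs_def)
  then show ?thesis
    using assms(4-7) by (simp add: card_rank_ball_inter_eq_card_lens[OF assms(1)])
qed

end
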